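(* Let $K>0$, $S=1/K$, and let $\eta:(0,K]\to[0,\infty)$ with $\eta(K)=0$; set $\phi(k)=k\eta(k)$ (with $\phi(0)=0$) and $\theta(s)=\eta(1/s)$ for $s\ge S$. Let $\Delta t,\Delta N>0$ and consider a platoon of vehicles $m=0,1,\dots,M$ ($M\ge 1$), vehicle $m-1$ being the leader of vehicle $m$, with positions $Y_m^j$ at times $j\Delta t$. The lead vehicle $0$ follows an arbitrary prescribed trajectory with $Y_0^{j+1}\ge Y_0^j$ for all $j$, and for $m\ge1$ $$Y_m^{j+1}=Y_m^j+\Delta t\,\theta\!\left(\frac{Y_{m-1}^j-Y_m^j}{\Delta N}\right).$$ Call the model collision-free if for every such leader trajectory and every initial configuration with $Y_{m-1}^0-Y_m^0\ge S\Delta N$ for all $m\ge1$, one has $Y_{m-1}^j-Y_m^j\ge S\Delta N$ for all $m\ge 1$ and all $j\ge0$. Then the model is collision-free if and only if $$\frac{\Delta N}{\Delta t}\ \ge\ \sup_{k\in[0,K)}\frac{\phi(k)}{1-k/K}.$$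
   Context: $\eta$ is the speed-density relation, $\phi$ the flow-density relation, $\theta$ the speed-spacing relation, $K$ the jam density and $S$ the jam spacing; the update rule is the time- and vehicle-discrete car-following formulation of the nonstandard second-order (LWR) model, with $\Delta N$ the vehicle step and $\Delta t$ the time step. *)

theory Defs
  imports "HOL-Analysis.Analysis" "HOL-Library.Extended_Real"
begin

definition phi :: "(real \<Rightarrow> real) \<Rightarrow> real \<Rightarrow> real" where
  "phi eta k = (if k = 0 then 0 else k * eta k)"

definition theta :: "(real \<Rightarrow> real) \<Rightarrow> real \<Rightarrow> real" where
  "theta eta s = eta (1 / s)"

definition platoon_traj ::
  "(real \<Rightarrow> real) \<Rightarrow> real \<Rightarrow> real \<Rightarrow> nat \<Rightarrow> (nat \<Rightarrow> nat \<Rightarrow> real) \<Rightarrow> bool" where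
  "platoon_traj eta dt dN M Y \<longleftrightarrow>
     (\<forall>j. Y 0 j \<le> Y 0 (Suc j)) \<and>
     (\<forall>m j. 1 \<le> m \<and> m \<le> M \<longrightarrow>
        Y m (Suc j) = Y m j + dt * theta eta ((Y (m - 1) j - Y m j) / dN))"

definition collision_free ::
  "(real \<Rightarrow> real) \<Rightarrow> real \<Rightarrow> real \<Rightarrow> real \<Rightarrow> nat \<Rightarrow> bool" where
  "collision_free eta K dt dN M \<longleftrightarrow>
     (\<forall>Y. platoon_traj eta dt dN M Y \<longrightarrow>
        (\<forall>m. 1 \<le> m \<and> m \<le> M \<longrightarrow> Y (m - 1) 0 - Y m 0 \<ge> (1 / K) * dN) \<longrightarrow>
        (\<forall>j m. 1 \<le> m \<and> m \<le> M \<longrightarrow> Y (m - 1) j - Y m j \<ge> (1 / K) * dN))"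

end

theory Submission
  imports Defs
begin

text \<open>Writing \<open>k = \<Delta>N / s\<close> for the spacing \<open>s\<close> of a follower, the bound on the flow says
  exactly that one time step moves the follower by at most \<open>s - S \<Delta>N\<close>, so it keeps the jam
  spacing behind a leader that does not move backwards. Speeds being nonnegative, by induction on
  time no vehicle ever moves backwards and all spacings stay admissible. Conversely, if the bound
  fails at some \<open>k\<close>, a platoon with uniform spacing \<open>\<Delta>N / k\<close> behind a standing leader violates
  the jam spacing after one step.\<close>

lemma flow_bound_iff:
  fixes K dt dN :: real
  assumes K: "K > 0" and dt: "dt > 0" and dN: "dN > 0"
  shows "ereal (dN / dt) \<ge> (SUP k\<in>{0..<K}. ereal (phi eta k / (1 - k / K))) \<longleftrightarrow>
    (\<forall>k. 0 < k \<longrightarrow> k < K \<longrightarrow> dt * eta k \<le> dN * (1 / k - 1 / K))"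
proof -
  have bound_iff: "phi eta k / (1 - k / K) \<le> dN / dt \<longleftrightarrow> dt * eta k \<le> dN * (1 / k - 1 / K)"
    if k: "0 < k" "k < K" for k
  proof -
    have "1 - k / K > 0"
      using k K by simp
    then have "phi eta k / (1 - k / K) \<le> dN / dt \<longleftrightarrow> dt * (k * eta k) \<le> dN * (1 - k / K)"
      using k dt by (simp add: phi_def divide_le_eq le_divide_eq mult.commute mult.left_commute)
    also have "\<dots> \<longleftrightarrow> k * (dt * eta k) \<le> k * (dN * (1 / k - 1 / K))"
      using k by (simp add: right_diff_distrib mult.left_commute mult.commute)
    also have "\<dots> \<longleftrightarrow> dt * eta k \<le> dN * (1 / k - 1 / K)"
      using k by simp
    finally show ?thesis .
  qed
  have "ereal (dN / dt) \<ge> (SUP k\<in>{0..<K}. ereal (phi eta k / (1 - k / K))) \<longleftrightarrow>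
      (\<forall>k\<in>{0..<K}. phi eta k / (1 - k / K) \<le> dN / dt)"
    by (simp add: SUP_le_iff)
  also have "\<dots> \<longleftrightarrow> (\<forall>k. 0 < k \<longrightarrow> k < K \<longrightarrow> phi eta k / (1 - k / K) \<le> dN / dt)"
    using K dt dN by (force simp: phi_def)
  also have "\<dots> \<longleftrightarrow> (\<forall>k. 0 < k \<longrightarrow> k < K \<longrightarrow> dt * eta k \<le> dN * (1 / k - 1 / K))"
    using bound_iff by blast
  finally show ?thesis .
qed

lemma theta_nonneg:
  assumes nonneg: "\<And>k. 0 < k \<Longrightarrow> k \<le> K \<Longrightarrow> eta k \<ge> 0"
    and K: "K > 0" and dN: "dN > 0" and s: "dN / K \<le> s"
  shows "theta eta (s / dN) \<ge> 0"
proof -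
  have "s > 0" using s K dN by (smt (verit) divide_pos_pos)
  hence "0 < dN / s" "dN / s \<le> K" using s K dN by (simp_all add: field_simps)
  thus ?thesis using nonneg by (simp add: theta_def)
qed

lemma spacing_step_safe:
  assumes bound: "\<forall>k. 0 < k \<longrightarrow> k < K \<longrightarrow> dt * eta k \<le> dN * (1 / k - 1 / K)"
    and eK: "eta K = 0" and K: "K > 0" and dN: "dN > 0"
    and s: "dN / K \<le> s" and d: "0 \<le> d"
  shows "dN / K \<le> s + d - dt * theta eta (s / dN)"
proof -
  have sp: "s > 0" using s K dN by (smt (verit) divide_pos_pos)
  define k where "k = dN / s"
  have k: "0 < k" "k \<le> K" using s sp K dN by (simp_all add: k_def field_simps)
  have "dt * theta eta (s / dN) = dt * eta k" by (simp add: theta_def k_def)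
  also have "\<dots> \<le> s - dN / K"
  proof (cases "k = K")
    case True thus ?thesis using eK s by simp
  next
    case False
    hence "dt * eta k \<le> dN * (1 / k - 1 / K)" using bound k by simp
    also have "\<dots> = s - dN / K" using dN sp by (simp add: k_def field_simps)
    finally show ?thesis .
  qed
  finally show ?thesis using d by simp
qed

definition spacings_admissible :: "real \<Rightarrow> real \<Rightarrow> nat \<Rightarrow> (nat \<Rightarrow> nat \<Rightarrow> real) \<Rightarrow> nat \<Rightarrow> bool" where
  "spacings_admissible K dN M Y j \<longleftrightarrow> (\<forall>m. 1 \<le> m \<and> m \<le> M \<longrightarrow> dN / K \<le> Y (m - 1) j - Y m j)"

lemma collision_free_iff_spacings_admissible:
  "collision_free eta K dt dN M \<longleftrightarrow>
    (\<forall>Y. platoon_traj eta dt dN M Y \<longrightarrow> spacings_admissible K dN M Y 0 \<longrightarrow>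
       (\<forall>j. spacings_admissible K dN M Y j))"
  by (auto simp: collision_free_def spacings_admissible_def)

lemma platoon_traj_step:
  assumes "platoon_traj eta dt dN M Y" and "1 \<le> m" and "m \<le> M"
  shows "Y m (Suc j) = Y m j + dt * theta eta ((Y (m - 1) j - Y m j) / dN)"
  using assms by (simp add: platoon_traj_def)

lemma platoon_traj_advances:
  assumes tr: "platoon_traj eta dt dN M Y" and adm: "spacings_admissible K dN M Y j"
    and m: "m \<le> M"
    and nonneg: "\<And>k. 0 < k \<Longrightarrow> k \<le> K \<Longrightarrow> eta k \<ge> 0"
    and K: "K > 0" and dt: "dt \<ge> 0" and dN: "dN > 0"
  shows "Y m j \<le> Y m (Suc j)"
proof (cases "m = 0")
  case True
  thus ?thesis using tr by (simp add: platoon_traj_def)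
next
  case False
  hence "dN / K \<le> Y (m - 1) j - Y m j"
    using adm m by (simp add: spacings_admissible_def)
  hence "theta eta ((Y (m - 1) j - Y m j) / dN) \<ge> 0"
    using theta_nonneg nonneg K dN by blast
  thus ?thesis using platoon_traj_step[OF tr _ m] False dt by simp
qed

lemma flow_bound_imp_collision_free:
  assumes bound: "\<forall>k. 0 < k \<longrightarrow> k < K \<longrightarrow> dt * eta k \<le> dN * (1 / k - 1 / K)"
    and nonneg: "\<And>k. 0 < k \<Longrightarrow> k \<le> K \<Longrightarrow> eta k \<ge> 0" and eK: "eta K = 0"
    and K: "K > 0" and dt: "dt \<ge> 0" and dN: "dN > 0"
  shows "collision_free eta K dt dN M"
  unfolding collision_free_iff_spacings_admissible
proof (intro allI impI)
  fix Y j
  assume tr: "platoon_traj eta dt dN M Y" and init: "spacings_admissible K dN M Y 0"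
  show "spacings_admissible K dN M Y j"
  proof (induction j)
    case 0
    show ?case using init .
  next
    case (Suc j)
    show ?case
      unfolding spacings_admissible_def
    proof (intro allI impI)
      fix m :: nat
      assume m: "1 \<le> m \<and> m \<le> M"
      define s where "s = Y (m - 1) j - Y m j"
      have s: "dN / K \<le> s"
        using Suc m by (simp add: spacings_admissible_def s_def)
      have "m - 1 \<le> M"
        using m by linarith
      hence "Y (m - 1) j \<le> Y (m - 1) (Suc j)"
        using platoon_traj_advances[OF tr Suc _ nonneg K dt dN] by blast
      hence "dN / K \<le> s + (Y (m - 1) (Suc j) - Y (m - 1) j) - dt * theta eta (s / dN)"
        using spacing_step_safe[OF bound eK K dN s] by simp
      thus "dN / K \<le> Y (m - 1) (Suc j) - Y m (Suc j)"
        using platoon_traj_step[OF tr] m by (simp add: s_def)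
    qed
  qed
qed

fun uniform_platoon :: "(real \<Rightarrow> real) \<Rightarrow> real \<Rightarrow> real \<Rightarrow> nat \<Rightarrow> real \<Rightarrow> nat \<Rightarrow> nat \<Rightarrow> real" where
  "uniform_platoon eta dt dN M h m 0 = - real m * h * dN"
| "uniform_platoon eta dt dN M h m (Suc j) =
     (if m = 0 \<or> M < m then uniform_platoon eta dt dN M h m j
      else uniform_platoon eta dt dN M h m j + dt * theta eta
        ((uniform_platoon eta dt dN M h (m - 1) j - uniform_platoon eta dt dN M h m j) / dN))"

lemma platoon_traj_uniform_platoon: "platoon_traj eta dt dN M (uniform_platoon eta dt dN M h)"
  by (simp add: platoon_traj_def)

lemma spacing_uniform_platoon_0:
  "1 \<le> m \<Longrightarrow> uniform_platoon eta dt dN M h (m - 1) 0 - uniform_platoon eta dt dN M h m 0 = h * dN"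
  by (simp add: of_nat_diff algebra_simps)

lemma collision_free_imp_flow_bound:
  assumes cf: "collision_free eta K dt dN M" and M: "M \<ge> 1"
    and K: "K > 0" and dN: "dN > 0" and k: "0 < k" "k \<le> K"
  shows "dt * eta k \<le> dN * (1 / k - 1 / K)"
proof -
  define Y where "Y = uniform_platoon eta dt dN M (1 / k)"
  have "dN / K \<le> dN / k"
    using k dN by (simp add: frac_le)
  hence "spacings_admissible K dN M Y 0"
    unfolding spacings_admissible_def Y_def
    by (metis spacing_uniform_platoon_0 mult_1 times_divide_eq_left mult.commute)
  hence "spacings_admissible K dN M Y 1"
    using cf platoon_traj_uniform_platoon unfolding collision_free_iff_spacings_admissible Y_def
    by blast
  hence "dN / K \<le> Y (1 - 1) 1 - Y 1 1"
    using M unfolding spacings_admissible_def by blast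
  hence "dN / K \<le> Y 0 1 - Y 1 1"
    by simp
  also have "Y 0 1 - Y 1 1 = dN / k - dt * eta k"
    using M dN by (simp add: Y_def theta_def)
  finally show ?thesis
    by (simp add: algebra_simps)
qed

theorem theorem4p2:
  fixes eta :: "real \<Rightarrow> real" and K dt dN :: real and M :: nat
  assumes "K > 0"
    and "\<And>k. 0 < k \<Longrightarrow> k \<le> K \<Longrightarrow> eta k \<ge> 0"
    and "eta K = 0"
    and "dt > 0" and "dN > 0" and "M \<ge> 1"
  shows "collision_free eta K dt dN M \<longleftrightarrow>
    ereal (dN / dt) \<ge> (SUP k\<in>{0..<K}. ereal (phi eta k / (1 - k / K)))"
proof -
  note K = assms(1) and nonneg = assms(2) and eK = assms(3)
    and dt = assms(4) and dN = assms(5) and M = assms(6)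
  have "collision_free eta K dt dN M \<longleftrightarrow>
      (\<forall>k. 0 < k \<longrightarrow> k < K \<longrightarrow> dt * eta k \<le> dN * (1 / k - 1 / K))"
  proof
    assume "collision_free eta K dt dN M"
    thus "\<forall>k. 0 < k \<longrightarrow> k < K \<longrightarrow> dt * eta k \<le> dN * (1 / k - 1 / K)"
      using collision_free_imp_flow_bound[OF _ M K dN] by simp
  next
    assume "\<forall>k. 0 < k \<longrightarrow> k < K \<longrightarrow> dt * eta k \<le> dN * (1 / k - 1 / K)"
    thus "collision_free eta K dt dN M"
      using flow_bound_imp_collision_free nonneg eK K dt dN by simp
  qed
  also have "\<dots> \<longleftrightarrow> ereal (dN / dt) \<ge> (SUP k\<in>{0..<K}. ereal (phi eta k / (1 - k / K)))"
    using flow_bound_iff[OF K dt dN] by simp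
  finally show ?thesis .
qed

end
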